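(* Let $R$ be a commutative ring and $\mathfrak a$ an ideal of $R$ such that $R$ is complete with respect to some $\mathfrak a$-filtration of $R$. Let $\mathfrak A=\mathfrak aR[[X]]+XR[[X]]$, let $n\ge0$ and $N\ge1$ be integers, and let $f,g\in R[[X]]$ be $\mathfrak a$-distinguished of order $n$ with $f\equiv g\pmod{\mathfrak A^{(n+1)N}}$. Then $P_f\equiv P_g\pmod{\mathfrak A^{N+1}}$ and $U_f\equiv U_g\pmod{\mathfrak A^N}$. Moreover, for each $i\le(n+1)N$ let $\Pi_i\subseteq R$ be a system of representatives for $R/\mathfrak a^i$, and assume $g=f\bmod\mathfrak A^{(n+1)N}$. Let $t=\tau_n(g)^{-1}\bmod\mathfrak A^{(n+1)N-n}$, set $S_0=1$, and for positive integers $i\le N-1$ define recursively $S_i=\tau_n(t\,\alpha_n(g)\,S_{i-1})\bmod\mathfrak A^{(n+1)N-n(i+1)}$. Then $$U_f^{-1}\equiv t\sum_{i=0}^{N-1}(-1)^iS_i\pmod{\mathfrak A^N}\quad\text{and}\quad P_f\equiv g\,t\sum_{i=0}^{N-1}(-1)^iS_i\pmod{\mathfrak A^N}.$$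
   Context: An $\mathfrak a$-filtration is a descending sequence of ideals each containing a power of $\mathfrak a$; $R$ is complete with respect to it if $R\to\varprojlim R/\mathfrak f_i$ is an isomorphism. $f\in R[[X]]$ is $\mathfrak a$-distinguished of order $n$ if $f_i\in\mathfrak a$ for $i<n$ and $f_n$ is a unit modulo $\mathfrak a$ ($f_i$ the coefficient of $X^i$). For such $f$ there are a unique monic polynomial $P_f\in R[X]$ of degree $n$ with non-leading coefficients in $\mathfrak a$ and a unique unit $U_f\in R[[X]]$ with $f=U_fP_f$. Operators: $\tau_n(f)=\sum_{i\ge0}f_{n+i}X^i$ and $\alpha_n(f)=\sum_{i=0}^{n-1}f_iX^i$. For $r\in R$ and $i\le(n+1)N$, $r\bmod\mathfrak a^i$ is the unique element of $\Pi_i$ congruent to $r$ modulo $\mathfrak a^i$; for $h\in R[[X]]$ and $k\le (n+1)N$, $h\bmod\mathfrak A^k=\sum_{i=0}^{k-1}(h_i\bmod\mathfrak a^{k-i})X^i\in R[X]$, a polynomial congruent to $h$ modulo $\mathfrak A^k$. *)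

theory Defs
  imports "HOL-Computational_Algebra.Polynomial_FPS"
begin

definition is_ideal :: "'a::comm_ring_1 set \<Rightarrow> bool" where
  "is_ideal I \<longleftrightarrow> 0 \<in> I \<and> (\<forall>x\<in>I. \<forall>y\<in>I. x + y \<in> I) \<and> (\<forall>r. \<forall>x\<in>I. r * x \<in> I)"

definition ideal_gen :: "'a::comm_ring_1 set \<Rightarrow> 'a set" where
  "ideal_gen S = \<Inter>{I. is_ideal I \<and> S \<subseteq> I}"

definition ideal_prod :: "'a::comm_ring_1 set \<Rightarrow> 'a set \<Rightarrow> 'a set" where
  "ideal_prod I J = ideal_gen {x * y | x y. x \<in> I \<and> y \<in> J}"

definition ideal_sum :: "'a::comm_ring_1 set \<Rightarrow> 'a set \<Rightarrow> 'a set" where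
  "ideal_sum I J = {x + y | x y. x \<in> I \<and> y \<in> J}"

primrec ideal_pow :: "'a::comm_ring_1 set \<Rightarrow> nat \<Rightarrow> 'a set" where
  "ideal_pow I 0 = UNIV"
| "ideal_pow I (Suc k) = ideal_prod I (ideal_pow I k)"

definition cong_mod :: "'a::comm_ring_1 \<Rightarrow> 'a \<Rightarrow> 'a set \<Rightarrow> bool" where
  "cong_mod x y I \<longleftrightarrow> x - y \<in> I"

definition is_adic_filtration :: "'a::comm_ring_1 set \<Rightarrow> (nat \<Rightarrow> 'a set) \<Rightarrow> bool" where
  "is_adic_filtration a F \<longleftrightarrow>
     (\<forall>i. is_ideal (F i)) \<and> (\<forall>i. F (Suc i) \<subseteq> F i) \<and> (\<forall>i. \<exists>k. ideal_pow a k \<subseteq> F i)"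

text \<open>\<open>R \<rightarrow> lim R/F_i\<close> is an isomorphism: injective and surjective onto compatible sequences.\<close>
definition complete_wrt :: "(nat \<Rightarrow> 'a::comm_ring_1 set) \<Rightarrow> bool" where
  "complete_wrt F \<longleftrightarrow>
     (\<forall>r. (\<forall>i. r \<in> F i) \<longrightarrow> r = 0) \<and>
     (\<forall>x :: nat \<Rightarrow> 'a. (\<forall>i j. i \<le> j \<longrightarrow> cong_mod (x j) (x i) (F i)) \<longrightarrow>
        (\<exists>r. \<forall>i. cong_mod r (x i) (F i)))"

definition bigA :: "'a::comm_ring_1 set \<Rightarrow> 'a fps set" where
  "bigA a = ideal_sum (ideal_gen (fps_const ` a)) {fps_X * h | h. True}"

definition distinguished :: "'a::comm_ring_1 set \<Rightarrow> nat \<Rightarrow> 'a fps \<Rightarrow> bool" where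
  "distinguished a n f \<longleftrightarrow> (\<forall>i<n. fps_nth f i \<in> a) \<and> (\<exists>u. fps_nth f n * u - 1 \<in> a)"

definition weierstrass_poly_factor :: "'a::comm_ring_1 set \<Rightarrow> nat \<Rightarrow> 'a poly \<Rightarrow> bool" where
  "weierstrass_poly_factor a n p \<longleftrightarrow> degree p = n \<and> lead_coeff p = 1 \<and> (\<forall>i<n. coeff p i \<in> a)"

definition Pf :: "'a::comm_ring_1 set \<Rightarrow> nat \<Rightarrow> 'a fps \<Rightarrow> 'a poly" where
  "Pf a n f = (THE p. weierstrass_poly_factor a n p \<and> (\<exists>U::'a fps. U dvd 1 \<and> f = U * fps_of_poly p))"

definition Uf :: "'a::comm_ring_1 set \<Rightarrow> nat \<Rightarrow> 'a fps \<Rightarrow> 'a fps" where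
  "Uf a n f = (THE U::'a fps. U dvd 1 \<and> (\<exists>p. weierstrass_poly_factor a n p \<and> f = U * fps_of_poly p))"

definition ring_inv :: "'a::comm_ring_1 \<Rightarrow> 'a" where
  "ring_inv x = (THE y. x * y = 1)"

definition tau :: "nat \<Rightarrow> 'a::comm_ring_1 fps \<Rightarrow> 'a fps" where
  "tau n f = Abs_fps (\<lambda>i. fps_nth f (n + i))"

definition alpha :: "nat \<Rightarrow> 'a::comm_ring_1 fps \<Rightarrow> 'a fps" where
  "alpha n f = Abs_fps (\<lambda>i. if i < n then fps_nth f i else 0)"

definition rep_systems :: "'a::comm_ring_1 set \<Rightarrow> nat \<Rightarrow> (nat \<Rightarrow> 'a set) \<Rightarrow> bool" where
  "rep_systems a m Reps \<longleftrightarrow> (\<forall>i\<le>m. \<forall>r. \<exists>!q. q \<in> Reps i \<and> cong_mod r q (ideal_pow a i))"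

definition rmod :: "'a::comm_ring_1 set \<Rightarrow> (nat \<Rightarrow> 'a set) \<Rightarrow> nat \<Rightarrow> 'a \<Rightarrow> 'a" where
  "rmod a Reps i r = (THE q. q \<in> Reps i \<and> cong_mod r q (ideal_pow a i))"

definition fmod :: "'a::comm_ring_1 set \<Rightarrow> (nat \<Rightarrow> 'a set) \<Rightarrow> nat \<Rightarrow> 'a fps \<Rightarrow> 'a poly" where
  "fmod a Reps k h = (\<Sum>i<k. monom (rmod a Reps (k - i) (fps_nth h i)) i)"

primrec Sseq :: "'a::comm_ring_1 set \<Rightarrow> (nat \<Rightarrow> 'a set) \<Rightarrow> nat \<Rightarrow> nat \<Rightarrow> 'a fps \<Rightarrow> 'a fps \<Rightarrow> nat \<Rightarrow> 'a fps" where
  "Sseq a Reps n N g t 0 = 1"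
| "Sseq a Reps n N g t (Suc i) =
     fps_of_poly (fmod a Reps ((n + 1) * N - n * (Suc i + 1)) (tau n (t * alpha n g * Sseq a Reps n N g t i)))"

end

(*
  Everything takes place inside the coefficientwise description of the powers of \<A>: a series
  lies in \<A>^s iff its coefficient of X^j lies in \<a>^(s-j).  Writing a Weierstrass polynomial as
  P = X^n + \<beta> with \<beta> \<in> \<a>R[[X]], dividing by X^n turns multiplication by P into the map
  D \<mapsto> D + \<tau>_n(\<beta> D), and L(D) = \<tau>_n(\<beta> D) raises the \<a>-adic order by one while lowering the
  \<A>-weight by at most n.  By completeness, D + L D = c is solved by the alternating Neumann
  series \<Sum> (-1)^i L^i c; this gives Weierstrass preparation.  For D = U_f^-1 U_g - 1 the right-hand
  side comes from f - g \<in> \<A>^((n+1)N), so the first N terms of the series lie in \<A>^N and the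
  tail in \<a>^N; this yields the congruences for U and P.  Likewise w = U_g^-1 \<tau>_n(g) solves
  w + \<tau>_n(\<tau>_n(g)^-1 \<alpha>_n(g) w) = 1, and S_i is the i-th term of its Neumann series computed with
  truncated coefficients, accurate modulo \<A>^((n+1)N - n(i+1)).
*)
theory Submission
  imports Defs
begin

unbundle fps_syntax

lemma is_ideal_0: "is_ideal I \<Longrightarrow> 0 \<in> I"
  by (simp add: is_ideal_def)

lemma is_ideal_add: "is_ideal I \<Longrightarrow> x \<in> I \<Longrightarrow> y \<in> I \<Longrightarrow> x + y \<in> I"
  by (simp add: is_ideal_def)

lemma is_ideal_mult_left: "is_ideal I \<Longrightarrow> x \<in> I \<Longrightarrow> r * x \<in> I"
  by (simp add: is_ideal_def)

lemma is_ideal_mult_right: "is_ideal I \<Longrightarrow> x \<in> I \<Longrightarrow> x * r \<in> I"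
  by (metis is_ideal_mult_left mult.commute)

lemma is_ideal_uminus: "is_ideal I \<Longrightarrow> x \<in> I \<Longrightarrow> - x \<in> I"
  using is_ideal_mult_left[of I x "-1"] by simp

lemma is_ideal_diff: "is_ideal I \<Longrightarrow> x \<in> I \<Longrightarrow> y \<in> I \<Longrightarrow> x - y \<in> I"
  using is_ideal_add[of I x "-y"] is_ideal_uminus[of I y] by simp

lemma is_ideal_sum: "is_ideal I \<Longrightarrow> (\<And>i. i \<in> A \<Longrightarrow> f i \<in> I) \<Longrightarrow> sum f A \<in> I"
  by (induction A rule: infinite_finite_induct) (auto simp: is_ideal_0 is_ideal_add)

lemma is_ideal_UNIV: "is_ideal UNIV"
  by (simp add: is_ideal_def)

lemma is_ideal_ideal_gen: "is_ideal (ideal_gen S)"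
  unfolding ideal_gen_def is_ideal_def by auto

lemma ideal_gen_superset: "S \<subseteq> ideal_gen S"
  unfolding ideal_gen_def by blast

lemma ideal_gen_least: "is_ideal I \<Longrightarrow> S \<subseteq> I \<Longrightarrow> ideal_gen S \<subseteq> I"
  unfolding ideal_gen_def by blast

lemma is_ideal_ideal_prod: "is_ideal (ideal_prod I J)"
  by (simp add: ideal_prod_def is_ideal_ideal_gen)

lemma ideal_prod_mem: "x \<in> I \<Longrightarrow> y \<in> J \<Longrightarrow> x * y \<in> ideal_prod I J"
  unfolding ideal_prod_def by (rule subsetD[OF ideal_gen_superset]) blast

lemma ideal_prod_least:
  "is_ideal K \<Longrightarrow> (\<And>x y. x \<in> I \<Longrightarrow> y \<in> J \<Longrightarrow> x * y \<in> K) \<Longrightarrow> ideal_prod I J \<subseteq> K"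
  unfolding ideal_prod_def by (rule ideal_gen_least) (assumption, blast)

lemma is_ideal_ideal_pow: "is_ideal (ideal_pow I k)"
  by (cases k) (simp_all add: is_ideal_UNIV is_ideal_ideal_prod)

lemma ideal_pow_Suc_subset: "ideal_pow I (Suc k) \<subseteq> ideal_pow I k"
  by (simp, rule ideal_prod_least) (auto simp: is_ideal_ideal_pow is_ideal_mult_left)

lemma ideal_pow_antimono: "q \<le> p \<Longrightarrow> ideal_pow I p \<subseteq> ideal_pow I q"
  by (induction p rule: dec_induct) (use ideal_pow_Suc_subset in blast)+

lemma ideal_pow_mem_mono: "x \<in> ideal_pow I p \<Longrightarrow> q \<le> p \<Longrightarrow> x \<in> ideal_pow I q"
  using ideal_pow_antimono by blast

lemma ideal_pow_1: "is_ideal I \<Longrightarrow> ideal_pow I 1 = I"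
  using ideal_prod_least[of I I UNIV] ideal_prod_mem[of _ I 1 UNIV]
  by (auto simp: is_ideal_mult_right)

lemma ideal_pow_mult_mem:
  "x \<in> ideal_pow I p \<Longrightarrow> y \<in> ideal_pow I q \<Longrightarrow> x * y \<in> ideal_pow I (p + q)"
proof (induction p arbitrary: x y)
  case 0
  then show ?case by (simp add: is_ideal_mult_left is_ideal_ideal_pow)
next
  case (Suc p)
  let ?K = "{x. \<forall>y \<in> ideal_pow I q. x * y \<in> ideal_pow I (Suc p + q)}"
  have J: "is_ideal (ideal_pow I (Suc p + q))"
    by (rule is_ideal_ideal_pow)
  have "is_ideal ?K"
    using is_ideal_0[OF J] is_ideal_add[OF J] is_ideal_mult_left[OF J]
    by (auto simp: is_ideal_def distrib_right mult.assoc)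
  moreover have "u * v \<in> ?K" if "u \<in> I" "v \<in> ideal_pow I p" for u v
    using ideal_prod_mem[OF \<open>u \<in> I\<close> Suc.IH[OF \<open>v \<in> ideal_pow I p\<close>]] by (simp add: mult.assoc)
  ultimately have "ideal_prod I (ideal_pow I p) \<subseteq> ?K"
    by (rule ideal_prod_least)
  then show ?case
    using Suc.prems by auto
qed

lemma ring_inv_eqI: "(x::'a::comm_ring_1) * y = 1 \<Longrightarrow> ring_inv x = y"
  unfolding ring_inv_def
proof (rule the_equality)
  fix z assume "x * y = 1" "x * z = 1"
  then have "z = z * (x * y)"
    by simp
  also have "\<dots> = (x * z) * y"
    by (simp add: ac_simps)
  finally show "z = y"
    using \<open>x * z = 1\<close> by simp
qed

lemma cong_mod_trivial_ring:
  assumes "(1::'a::comm_ring_1) = 0" and "is_ideal I"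
  shows "cong_mod x y I"
proof -
  have "x - y = (x - y) * 1"
    by simp
  then show ?thesis
    using assms by (simp add: cong_mod_def is_ideal_0)
qed

section \<open>Coefficientwise descriptions of \<open>\<A>\<^sup>s\<close> and \<open>\<a>\<^sup>k R[[X]]\<close>\<close>

definition fps_Apow :: "'a::comm_ring_1 set \<Rightarrow> nat \<Rightarrow> 'a fps set" where
  "fps_Apow a s = {x. \<forall>j. x $ j \<in> ideal_pow a (s - j)}"

definition fps_apow :: "'a::comm_ring_1 set \<Rightarrow> nat \<Rightarrow> 'a fps set" where
  "fps_apow a k = {x. \<forall>j. x $ j \<in> ideal_pow a k}"

lemma fps_ApowI: "(\<And>j. x $ j \<in> ideal_pow a (s - j)) \<Longrightarrow> x \<in> fps_Apow a s"
  by (simp add: fps_Apow_def)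

lemma fps_ApowD: "x \<in> fps_Apow a s \<Longrightarrow> x $ j \<in> ideal_pow a (s - j)"
  by (simp add: fps_Apow_def)

lemma fps_apowI: "(\<And>j. x $ j \<in> ideal_pow a k) \<Longrightarrow> x \<in> fps_apow a k"
  by (simp add: fps_apow_def)

lemma fps_apowD: "x \<in> fps_apow a k \<Longrightarrow> x $ j \<in> ideal_pow a k"
  by (simp add: fps_apow_def)

lemma fps_mult_nth_mem:
  assumes "is_ideal I" "\<And>i. i \<le> j \<Longrightarrow> x $ i * y $ (j - i) \<in> I"
  shows "(x * y) $ j \<in> I"
  unfolding fps_mult_nth using assms by (auto intro: is_ideal_sum)

lemma is_ideal_fps_Apow: "is_ideal (fps_Apow a s)"
  unfolding is_ideal_def
proof (intro conjI ballI allI)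
  show "0 \<in> fps_Apow a s"
    by (rule fps_ApowI) (simp add: is_ideal_0 is_ideal_ideal_pow)
  fix x y assume "x \<in> fps_Apow a s" "y \<in> fps_Apow a s"
  then show "x + y \<in> fps_Apow a s"
    by (intro fps_ApowI) (simp add: is_ideal_add is_ideal_ideal_pow fps_ApowD)
next
  fix r x assume x: "x \<in> fps_Apow a s"
  show "r * x \<in> fps_Apow a s"
  proof (intro fps_ApowI fps_mult_nth_mem[OF is_ideal_ideal_pow])
    fix i j :: nat assume "i \<le> j"
    then have "x $ (j - i) \<in> ideal_pow a (s - j)"
      by (intro ideal_pow_mem_mono[OF fps_ApowD[OF x]]) linarith
    then show "r $ i * x $ (j - i) \<in> ideal_pow a (s - j)"
      by (rule is_ideal_mult_left[OF is_ideal_ideal_pow])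
  qed
qed

lemma is_ideal_fps_apow: "is_ideal (fps_apow a k)"
  unfolding is_ideal_def
proof (intro conjI ballI allI)
  show "0 \<in> fps_apow a k"
    by (rule fps_apowI) (simp add: is_ideal_0 is_ideal_ideal_pow)
  fix x y assume "x \<in> fps_apow a k" "y \<in> fps_apow a k"
  then show "x + y \<in> fps_apow a k"
    by (intro fps_apowI) (simp add: is_ideal_add is_ideal_ideal_pow fps_apowD)
next
  fix r x assume "x \<in> fps_apow a k"
  then show "r * x \<in> fps_apow a k"
    by (intro fps_apowI fps_mult_nth_mem[OF is_ideal_ideal_pow])
      (simp add: is_ideal_mult_left[OF is_ideal_ideal_pow] fps_apowD)
qed

lemmas fps_Apow_add = is_ideal_add[OF is_ideal_fps_Apow]
lemmas fps_Apow_diff = is_ideal_diff[OF is_ideal_fps_Apow]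
lemmas fps_Apow_uminus = is_ideal_uminus[OF is_ideal_fps_Apow]
lemmas fps_Apow_mult_left = is_ideal_mult_left[OF is_ideal_fps_Apow]
lemmas fps_Apow_mult_right = is_ideal_mult_right[OF is_ideal_fps_Apow]

lemma fps_Apow_mono: "x \<in> fps_Apow a s \<Longrightarrow> r \<le> s \<Longrightarrow> x \<in> fps_Apow a r"
  by (rule fps_ApowI, erule ideal_pow_mem_mono[OF fps_ApowD]) simp

lemma fps_apow_0 [simp]: "fps_apow a 0 = UNIV"
  by (simp add: fps_apow_def)

lemma fps_apow_subset_Apow: "x \<in> fps_apow a k \<Longrightarrow> x \<in> fps_Apow a k"
  by (rule fps_ApowI, erule ideal_pow_mem_mono[OF fps_apowD]) simp

lemma fps_Apow_mult: "x \<in> fps_Apow a s \<Longrightarrow> y \<in> fps_Apow a r \<Longrightarrow> x * y \<in> fps_Apow a (s + r)"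
proof (intro fps_ApowI fps_mult_nth_mem[OF is_ideal_ideal_pow])
  fix i j :: nat assume x: "x \<in> fps_Apow a s" and y: "y \<in> fps_Apow a r" and "i \<le> j"
  have "x $ i * y $ (j - i) \<in> ideal_pow a ((s - i) + (r - (j - i)))"
    by (rule ideal_pow_mult_mem[OF fps_ApowD[OF x] fps_ApowD[OF y]])
  then show "x $ i * y $ (j - i) \<in> ideal_pow a (s + r - j)"
    by (rule ideal_pow_mem_mono) (use \<open>i \<le> j\<close> in linarith)
qed

lemma fps_apow_mult: "x \<in> fps_apow a k \<Longrightarrow> y \<in> fps_apow a m \<Longrightarrow> x * y \<in> fps_apow a (k + m)"
  by (intro fps_apowI fps_mult_nth_mem[OF is_ideal_ideal_pow]) (simp add: ideal_pow_mult_mem fps_apowD)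

lemma fps_apow_1: "is_ideal a \<Longrightarrow> x \<in> fps_apow a 1 \<longleftrightarrow> (\<forall>j. x $ j \<in> a)"
  using ideal_pow_1[of a] by (simp add: fps_apow_def del: ideal_pow.simps)

lemma tau_nth [simp]: "tau n f $ m = f $ (n + m)"
  by (simp add: tau_def)

lemma alpha_nth [simp]: "alpha n f $ m = (if m < n then f $ m else 0)"
  by (simp add: alpha_def)

lemma tau_diff: "tau n (x - y) = tau n x - tau n y"
  by (rule fps_ext) simp

lemma tau_add: "tau n (x + y) = tau n x + tau n y"
  by (rule fps_ext) simp

lemma tau_X_power_mult: "tau n (fps_X ^ n * g) = g"
  by (rule fps_ext) (simp add: fps_X_power_mult_nth)

lemma tau_0 [simp]: "tau 0 f = f"
  by (rule fps_ext) simp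

lemma alpha_plus_X_power_tau: "alpha n f + fps_X ^ n * tau n f = f"
  by (rule fps_ext) (simp add: fps_X_power_mult_nth)

lemma alpha_eq_sum: "alpha k h = (\<Sum>j<k. fps_const (h $ j) * fps_X ^ j)"
  by (rule fps_ext) (simp add: fps_sum_nth fps_X_power_nth if_distrib[of "(*) _"] sum.delta' cong: if_cong)

lemma tau_fps_Apow: "x \<in> fps_Apow a s \<Longrightarrow> tau n x \<in> fps_Apow a (s - n)"
  by (rule fps_ApowI) (simp add: fps_ApowD diff_diff_left)

lemma tau_fps_apow: "x \<in> fps_apow a k \<Longrightarrow> tau n x \<in> fps_apow a k"
  by (rule fps_apowI) (simp add: fps_apowD)

lemma tau_mult_fps_Apow: "x \<in> fps_Apow a s \<Longrightarrow> tau n (c * x) \<in> fps_Apow a (s - n)"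
  by (intro tau_fps_Apow fps_Apow_mult_left)

lemma tau_mult_fps_apow:
  "c \<in> fps_apow a 1 \<Longrightarrow> x \<in> fps_apow a k \<Longrightarrow> tau n (c * x) \<in> fps_apow a (Suc k)"
  using tau_fps_apow fps_apow_mult by fastforce

lemma fps_X_in_bigA: "fps_X \<in> bigA a"
proof -
  have "0 + fps_X * 1 \<in> bigA a"
    unfolding bigA_def ideal_sum_def using is_ideal_0[OF is_ideal_ideal_gen] by blast
  then show ?thesis by simp
qed

lemma fps_const_in_bigA: "c \<in> a \<Longrightarrow> fps_const c \<in> bigA a"
proof -
  assume "c \<in> a"
  then have "fps_const c + fps_X * 0 \<in> bigA a"
    unfolding bigA_def ideal_sum_def using ideal_gen_superset by blast
  then show ?thesis by simp
qed

lemma bigA_subset_fps_Apow_1: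
  assumes "is_ideal a"
  shows "bigA a \<subseteq> fps_Apow a 1"
proof
  fix z assume "z \<in> bigA a"
  then obtain x h where z: "z = x + fps_X * h" and x: "x \<in> ideal_gen (fps_const ` a)"
    unfolding bigA_def ideal_sum_def by blast
  have "fps_const c \<in> fps_apow a 1" if "c \<in> a" for c
    unfolding fps_apow_1[OF assms] using that is_ideal_0[OF assms] by (auto simp: fps_const_def)
  then have "ideal_gen (fps_const ` a) \<subseteq> fps_apow a 1"
    by (intro ideal_gen_least is_ideal_fps_apow) blast
  then have "x \<in> fps_Apow a 1"
    using x fps_apow_subset_Apow by blast
  moreover have "fps_X * h \<in> fps_Apow a 1"
    by (intro fps_Apow_mult_right fps_ApowI) (simp add: is_ideal_0 is_ideal_ideal_pow)
  ultimately show "z \<in> fps_Apow a 1"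
    unfolding z by (rule fps_Apow_add)
qed

lemma fps_X_power_in_ideal_pow: "fps_X ^ j \<in> ideal_pow (bigA a) j"
  by (induction j) (simp_all add: ideal_prod_mem fps_X_in_bigA)

lemma fps_const_in_ideal_pow: "c \<in> ideal_pow a m \<Longrightarrow> fps_const c \<in> ideal_pow (bigA a) m"
proof (induction m arbitrary: c)
  case 0
  then show ?case by simp
next
  case (Suc m)
  let ?S = "{c. fps_const c \<in> ideal_pow (bigA a) (Suc m)}"
  have J: "is_ideal (ideal_pow (bigA a) (Suc m))"
    by (rule is_ideal_ideal_pow)
  have "is_ideal ?S"
    using is_ideal_0[OF J] is_ideal_add[OF J] is_ideal_mult_left[OF J]
    by (auto simp: is_ideal_def simp flip: fps_const_add fps_const_mult simp del: ideal_pow.simps)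
  then have "ideal_prod a (ideal_pow a m) \<subseteq> ?S"
    by (rule ideal_prod_least)
      (auto simp: ideal_prod_mem fps_const_in_bigA Suc.IH simp flip: fps_const_mult)
  then show ?case
    using Suc.prems by auto
qed

lemma fps_Apow_subset_ideal_pow: "fps_Apow a k \<subseteq> ideal_pow (bigA a) k"
proof
  fix h assume h: "h \<in> fps_Apow a k"
  have J: "is_ideal (ideal_pow (bigA a) k)"
    by (rule is_ideal_ideal_pow)
  have "fps_const (h $ j) * fps_X ^ j \<in> ideal_pow (bigA a) k" if "j < k" for j
    using ideal_pow_mult_mem[OF fps_const_in_ideal_pow[OF fps_ApowD[OF h, of j]]
        fps_X_power_in_ideal_pow[of j]]
      that by simp
  then have "alpha k h \<in> ideal_pow (bigA a) k"
    unfolding alpha_eq_sum by (auto intro: is_ideal_sum[OF J])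
  moreover have "fps_X ^ k * tau k h \<in> ideal_pow (bigA a) k"
    by (rule is_ideal_mult_right[OF J fps_X_power_in_ideal_pow])
  ultimately show "h \<in> ideal_pow (bigA a) k"
    using is_ideal_add[OF J] alpha_plus_X_power_tau[of k h] by metis
qed

lemma ideal_pow_bigA: "is_ideal a \<Longrightarrow> ideal_pow (bigA a) k = fps_Apow a k"
proof (induction k)
  case 0
  then show ?case by (simp add: fps_Apow_def)
next
  case (Suc k)
  have "ideal_prod (bigA a) (ideal_pow (bigA a) k) \<subseteq> fps_Apow a (1 + k)"
    using Suc bigA_subset_fps_Apow_1[OF Suc.prems]
    by (intro ideal_prod_least is_ideal_fps_Apow fps_Apow_mult) auto
  then show ?case
    using fps_Apow_subset_ideal_pow by fastforce
qed

section \<open>Alternating Neumann sums\<close>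

context
  fixes L :: "'a::comm_ring_1 fps \<Rightarrow> 'a fps"
  assumes additive: "\<And>x y. L (x - y) = L x - L y"
begin

lemma additive_0: "L 0 = 0"
  using additive[of 0 0] by simp

lemma additive_uminus: "L (- x) = - L x"
  using additive[of 0 x] by (simp add: additive_0)

lemma additive_add: "L (x + y) = L x + L y"
  using additive[of x "- y"] by (simp add: additive_uminus)

lemma additive_sign_mult: "L ((-1) ^ K * y) = (-1) ^ K * L y"
  by (induction K) (simp_all add: additive_uminus)

lemma funpow_additive: "(L ^^ K) (x - y) = (L ^^ K) x - (L ^^ K) y"
  by (induction K) (simp_all add: additive)

lemma neumann_partial_sum:
  "(\<Sum>i<K. (-1) ^ i * (L ^^ i) b) + L (\<Sum>i<K. (-1) ^ i * (L ^^ i) b) = b - (-1) ^ K * (L ^^ K) b"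
proof (induction K)
  case 0
  then show ?case by (simp add: additive_0)
next
  case (Suc K)
  have "L (\<Sum>i<Suc K. (-1) ^ i * (L ^^ i) b)
      = L (\<Sum>i<K. (-1) ^ i * (L ^^ i) b) + (-1) ^ K * (L ^^ Suc K) b"
    by (simp add: additive_add additive_sign_mult)
  then show ?case
    using Suc.IH by (simp add: algebra_simps)
qed

lemma fixpoint_neumann_expansion:
  assumes "x = c - L x"
  shows "x = (\<Sum>i<K. (-1) ^ i * (L ^^ i) c) + (-1) ^ K * (L ^^ K) x"
proof (induction K)
  case 0
  then show ?case by simp
next
  case (Suc K)
  have "(L ^^ K) x = (L ^^ K) c - (L ^^ K) (L x)"
    using funpow_additive[of K c "L x"] assms by simp
  also have "(L ^^ K) (L x) = (L ^^ Suc K) x"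
    by (simp only: funpow_Suc_right o_apply)
  finally have step: "(-1) ^ K * (L ^^ K) x = (-1) ^ K * (L ^^ K) c + (-1) ^ Suc K * (L ^^ Suc K) x"
    by (simp only: right_diff_distrib power_Suc mult_minus1 mult_minus_left diff_conv_add_uminus
        mult_1_left distrib_left mult_minus_right)
  have "x = (\<Sum>i<K. (-1) ^ i * (L ^^ i) c) + (-1) ^ K * (L ^^ K) x"
    by (rule Suc.IH)
  also have "\<dots> = (\<Sum>i<Suc K. (-1) ^ i * (L ^^ i) c) + (-1) ^ Suc K * (L ^^ Suc K) x"
    by (simp only: step sum.lessThan_Suc add.assoc)
  finally show ?case .
qed

end

lemma funpow_fps_apow:
  assumes "\<And>k x. x \<in> fps_apow a k \<Longrightarrow> L x \<in> fps_apow a (Suc k)"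
  shows "(L ^^ K) b \<in> fps_apow a K"
  by (induction K) (simp_all add: assms)

lemma funpow_fps_Apow:
  assumes "\<And>s x. x \<in> fps_Apow a s \<Longrightarrow> L x \<in> fps_Apow a (s - n)" and "c \<in> fps_Apow a s"
  shows "(L ^^ i) c \<in> fps_Apow a (s - n * i)"
proof (induction i)
  case 0
  then show ?case using assms(2) by simp
next
  case (Suc i)
  then have "L ((L ^^ i) c) \<in> fps_Apow a (s - n * i - n)"
    by (rule assms(1))
  then show ?case
    by (simp add: diff_diff_left add.commute)
qed

lemma ideal_pow_cauchy_diff:
  assumes "\<And>k. x (Suc k) - x k \<in> ideal_pow a k" "i \<le> j"
  shows "x j - x i \<in> ideal_pow a i"
  using assms(2)
proof (induction j rule: dec_induct)
  case base
  then show ?case by (simp add: is_ideal_0 is_ideal_ideal_pow)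
next
  case (step j)
  have "x (Suc j) - x j \<in> ideal_pow a i"
    using assms(1)[of j] ideal_pow_antimono[OF \<open>i \<le> j\<close>] by blast
  then show ?case
    using is_ideal_add[OF is_ideal_ideal_pow step.IH] by fastforce
qed

locale complete_adic_ring =
  fixes a :: "'a::comm_ring_1 set" and F :: "nat \<Rightarrow> 'a set"
  assumes ideal: "is_ideal a"
    and filtration: "is_adic_filtration a F"
    and complete: "complete_wrt F"
begin

lemma is_ideal_F: "is_ideal (F i)"
  using filtration by (simp add: is_adic_filtration_def)

lemma ideal_pow_subset_F: "\<exists>k. ideal_pow a k \<subseteq> F i"
  using filtration by (simp add: is_adic_filtration_def)

lemma F_Inter_zero: "(\<And>i. r \<in> F i) \<Longrightarrow> r = 0"
  using complete by (simp add: complete_wrt_def)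

lemma F_limit_exists:
  "(\<And>i j. i \<le> j \<Longrightarrow> x j - x i \<in> F i) \<Longrightarrow> \<exists>r. \<forall>i. r - x i \<in> F i"
  using complete by (simp add: complete_wrt_def cong_mod_def)

lemma ideal_pow_Inter_zero: "(\<And>k. r \<in> ideal_pow a k) \<Longrightarrow> r = 0"
  using ideal_pow_subset_F by (metis F_Inter_zero subsetD)

lemma ideal_pow_cauchy_limit:
  assumes cauchy: "\<And>k. x (Suc k) - x k \<in> ideal_pow a k"
  shows "\<exists>r. \<forall>i. \<forall>\<^sub>F k in sequentially. r - x k \<in> F i"
proof -
  obtain \<kappa> where \<kappa>: "\<And>i. ideal_pow a (\<kappa> i) \<subseteq> F i"
    using ideal_pow_subset_F by metis
  define K where "K i = (\<Sum>l\<le>i. \<kappa> l)" for i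
  have K_mono: "K i \<le> K j" if "i \<le> j" for i j
    unfolding K_def using that by (intro sum_mono2) auto
  have "\<kappa> i \<le> K i" for i
    unfolding K_def by (rule member_le_sum) auto
  then have K_F: "ideal_pow a (K i) \<subseteq> F i" for i
    using ideal_pow_antimono \<kappa> by blast
  have diff_F: "x k - x (K i) \<in> F i" if "K i \<le> k" for i k
    using ideal_pow_cauchy_diff[OF cauchy that] K_F by blast
  obtain r where r: "\<And>i. r - x (K i) \<in> F i"
    using F_limit_exists[of "\<lambda>i. x (K i)"] diff_F K_mono by blast
  have "r - x k \<in> F i" if "K i \<le> k" for i k
    using is_ideal_diff[OF is_ideal_F r diff_F[OF that]] by simp
  then show ?thesis
    unfolding eventually_sequentially by blast
qed

lemma exists_solution_tau_mult:
  assumes c: "c \<in> fps_apow a 1"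
  shows "\<exists>w. w + tau n (c * w) = b"
proof -
  \<comment> \<open>\<open>w\<close> is the coefficientwise limit of the Neumann partial sums \<open>W K\<close>.\<close>
  define L where "L x = tau n (c * x)" for x
  have additive: "L (x - y) = L x - L y" for x y
    by (simp add: L_def algebra_simps tau_diff)
  have tail: "(-1) ^ K * (L ^^ K) b \<in> fps_apow a K" for K
    using c by (intro is_ideal_mult_left[OF is_ideal_fps_apow] funpow_fps_apow)
      (simp add: L_def tau_mult_fps_apow)
  define W where "W K = (\<Sum>i<K. (-1) ^ i * (L ^^ i) b)" for K
  have "\<exists>r. \<forall>i. \<forall>\<^sub>F K in sequentially. r - W K $ m \<in> F i" for m
    using fps_apowD[OF tail] by (intro ideal_pow_cauchy_limit) (simp add: W_def)
  then obtain w where lim: "\<And>m i. \<forall>\<^sub>F K in sequentially. w $ m - W K $ m \<in> F i"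
    by (metis fps_nth_Abs_fps)
  have "(w + L w - b) $ m \<in> F i" for m i
  proof -
    obtain k where k: "ideal_pow a k \<subseteq> F i"
      using ideal_pow_subset_F by blast
    have "\<forall>\<^sub>F K in sequentially. (\<forall>j\<in>{..n + m}. (w - W K) $ j \<in> F i) \<and> k \<le> K"
      using lim by (intro eventually_conj eventually_ball_finite eventually_ge_at_top) auto
    then obtain K where close: "\<And>j. j \<le> n + m \<Longrightarrow> (w - W K) $ j \<in> F i" and "k \<le> K"
      unfolding eventually_sequentially by blast
    have "b = W K + L (W K) + (-1) ^ K * (L ^^ K) b"
      using neumann_partial_sum[OF additive, where K=K and b=b] by (simp add: W_def)
    then have "w + L w - b = (w - W K) + L (w - W K) - (-1) ^ K * (L ^^ K) b"
      unfolding additive by (simp add: algebra_simps)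
    then have split: "(w + L w - b) $ m = (w - W K) $ m + L (w - W K) $ m - ((-1) ^ K * (L ^^ K) b) $ m"
      by (simp only: fps_add_nth fps_sub_nth)
    have contracted: "L (w - W K) $ m \<in> F i"
      unfolding L_def tau_nth
      by (intro fps_mult_nth_mem[OF is_ideal_F] is_ideal_mult_left[OF is_ideal_F] close) simp
    have remainder: "((-1) ^ K * (L ^^ K) b) $ m \<in> F i"
      using fps_apowD[OF tail] ideal_pow_antimono[OF \<open>k \<le> K\<close>] k by blast
    show ?thesis
      unfolding split
      by (intro is_ideal_diff[OF is_ideal_F] is_ideal_add[OF is_ideal_F] close contracted remainder) simp
  qed
  then have "(w + L w - b) $ m = 0" for m
    using F_Inter_zero by blast
  then have "w + L w - b = 0"
    by (intro fps_ext) simp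
  then show ?thesis
    by (auto simp: L_def)
qed

lemma unit_if_unit_mod:
  assumes "c * u - 1 \<in> a"
  shows "\<exists>d. c * d = 1"
proof -
  \<comment> \<open>Inverting \<open>1 + x\<close> with \<open>x \<in> \<a>\<close> is the constant-coefficient case of the equation above.\<close>
  define x where "x = c * u - 1"
  have "fps_const x \<in> fps_apow a 1"
    unfolding fps_apow_1[OF ideal] using assms is_ideal_0[OF ideal] by (simp add: fps_const_def x_def)
  then obtain w where "w + tau 0 (fps_const x * w) = 1"
    using exists_solution_tau_mult by blast
  then have "(w + fps_const x * w) $ 0 = 1"
    by simp
  then have "(1 + x) * w $ 0 = 1"
    by (simp add: algebra_simps)
  then have "c * (u * w $ 0) = 1"
    by (simp add: x_def mult.assoc)
  then show ?thesis ..
qed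

lemma fps_unit_if_unit_mod:
  assumes "f $ 0 * u - 1 \<in> a"
  shows "\<exists>g. f * g = 1"
  using unit_if_unit_mod[OF assms] fps_right_inverse by blast

lemma distinguished_tau_unit: "distinguished a n f \<Longrightarrow> \<exists>t. tau n f * t = 1"
  unfolding distinguished_def by (auto intro: fps_unit_if_unit_mod)

lemma distinguished_alpha: "distinguished a n f \<Longrightarrow> alpha n f \<in> fps_apow a 1"
  unfolding fps_apow_1[OF ideal] by (simp add: distinguished_def is_ideal_0[OF ideal])

end

section \<open>Weierstrass preparation\<close>

lemma tau_weierstrass_poly_factor: "weierstrass_poly_factor a n p \<Longrightarrow> tau n (fps_of_poly p) = 1"
  by (rule fps_ext) (auto simp: weierstrass_poly_factor_def coeff_eq_0)

lemma weierstrass_poly_factor_minus_X_power: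
  assumes "is_ideal a" and "weierstrass_poly_factor a n p"
  shows "fps_of_poly p - fps_X ^ n \<in> fps_apow a 1"
  unfolding fps_apow_1[OF assms(1)]
proof
  fix j
  have "degree p = n" "coeff p n = 1" "\<forall>i<n. coeff p i \<in> a"
    using assms(2) by (auto simp: weierstrass_poly_factor_def)
  then show "(fps_of_poly p - fps_X ^ n) $ j \<in> a"
    using is_ideal_0[OF assms(1)] coeff_eq_0[of p j] by (cases j n rule: linorder_cases) auto
qed

lemma weierstrass_poly_factor_of_fps:
  fixes P :: "'a::comm_ring_1 fps"
  assumes nontrivial: "(1::'a) \<noteq> 0"
    and "tau n P = 1" and "\<And>j. j < n \<Longrightarrow> P $ j \<in> a"
  shows "\<exists>p. weierstrass_poly_factor a n p \<and> fps_of_poly p = P"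
proof -
  define p where "p = (\<Sum>j<n. monom (P $ j) j) + monom 1 n"
  have coeff_p: "coeff p i = (if i < n then P $ i else if i = n then 1 else 0)" for i
    by (simp add: p_def coeff_sum coeff_monom sum.delta sum.delta')
  have high: "P $ (n + m) = (1::'a fps) $ m" for m
    using arg_cong[OF assms(2), of "\<lambda>h. h $ m"] by simp
  have "fps_of_poly p $ j = P $ j" for j
  proof (cases "j < n")
    case False
    then obtain m where "j = n + m"
      by (metis le_add_diff_inverse not_less)
    then show ?thesis
      using high[of m] by (simp add: coeff_p)
  qed (simp add: coeff_p)
  then have "fps_of_poly p = P"
    by (rule fps_ext)
  moreover have "degree p = n"
  proof (rule antisym)
    show "degree p \<le> n"
      by (rule degree_le) (simp add: coeff_p)
    show "n \<le> degree p"
      by (rule le_degree) (simp add: coeff_p nontrivial)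
  qed
  then have "weierstrass_poly_factor a n p"
    using assms(3) by (simp add: weierstrass_poly_factor_def coeff_p)
  ultimately show ?thesis
    by blast
qed

context complete_adic_ring
begin

lemma tau_mult_fixpoint_zero:
  assumes \<beta>: "\<beta> \<in> fps_apow a 1" and fixpoint: "D + tau n (\<beta> * D) = 0"
  shows "D = 0"
proof -
  have D_eq: "D = - tau n (\<beta> * D)"
    using fixpoint by (simp add: eq_neg_iff_add_eq_0)
  have "D \<in> fps_apow a k" for k
  proof (induction k)
    case (Suc k)
    then show ?case
      using D_eq is_ideal_uminus[OF is_ideal_fps_apow tau_mult_fps_apow[OF \<beta>]] by metis
  qed simp
  then show ?thesis
    by (intro fps_ext) (simp add: ideal_pow_Inter_zero fps_apowD)
qed

lemma solution_tau_mult_unit: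
  assumes c: "c \<in> fps_apow a 1" and w: "w + tau n (c * w) = 1"
  shows "\<exists>w'. w * w' = 1"
proof -
  have "tau n (c * w) \<in> fps_apow a 1"
    using tau_mult_fps_apow[OF c, of w 0] by simp
  then have "tau n (c * w) $ 0 \<in> a"
    unfolding fps_apow_1[OF ideal] ..
  moreover have "w $ 0 * 1 - 1 = - (tau n (c * w) $ 0)"
    using arg_cong[OF w, of "\<lambda>h. h $ 0"] by (simp add: algebra_simps eq_neg_iff_add_eq_0)
  ultimately have "w $ 0 * 1 - 1 \<in> a"
    using is_ideal_uminus[OF ideal] by simp
  then show ?thesis
    by (rule fps_unit_if_unit_mod)
qed

lemma weierstrass_preparation:
  assumes nontrivial: "(1::'a) \<noteq> 0" and dist: "distinguished a n f"
  shows "\<exists>U p. U dvd 1 \<and> weierstrass_poly_factor a n p \<and> f = U * fps_of_poly p"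
proof -
  obtain t where t: "tau n f * t = 1"
    using distinguished_tau_unit[OF dist] ..
  define c where "c = t * alpha n f"
  have c: "c \<in> fps_apow a 1"
    unfolding c_def by (rule is_ideal_mult_left[OF is_ideal_fps_apow distinguished_alpha[OF dist]])
  obtain w where w: "w + tau n (c * w) = 1"
    using exists_solution_tau_mult[OF c] by blast
  define P where "P = f * (t * w)"
  have P_eq: "P = c * w + fps_X ^ n * w"
  proof -
    have "P = (alpha n f + fps_X ^ n * tau n f) * (t * w)"
      by (simp add: P_def alpha_plus_X_power_tau)
    also have "\<dots> = c * w + fps_X ^ n * ((tau n f * t) * w)"
      by (simp add: c_def algebra_simps)
    finally show ?thesis
      by (simp add: t)
  qed
  have "tau n P = 1"
    using w by (simp add: P_eq tau_add tau_X_power_mult add.commute)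
  moreover have "P $ j \<in> a" if "j < n" for j
  proof -
    have "c * w \<in> fps_apow a 1"
      by (rule is_ideal_mult_right[OF is_ideal_fps_apow c])
    then have "(c * w) $ j \<in> a"
      unfolding fps_apow_1[OF ideal] ..
    then show ?thesis
      using that by (simp add: P_eq fps_X_power_mult_nth)
  qed
  ultimately obtain p where p: "weierstrass_poly_factor a n p" and P: "fps_of_poly p = P"
    using weierstrass_poly_factor_of_fps[OF nontrivial] by blast
  obtain w' where w': "w * w' = 1"
    using solution_tau_mult_unit[OF c w] by blast
  define U where "U = tau n f * w'"
  have "U * (t * w) = (tau n f * t) * (w * w')"
    by (simp add: U_def ac_simps)
  then have U: "U * (t * w) = 1"
    using t w' by simp
  have "U * fps_of_poly p = f * (U * (t * w))"
    by (simp add: P P_def ac_simps)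
  then have "f = U * fps_of_poly p"
    using U by simp
  moreover have "U dvd 1"
    using U by (rule dvdI[OF sym])
  ultimately show ?thesis
    using p by blast
qed

lemma weierstrass_preparation_unique:
  assumes p: "weierstrass_poly_factor a n p" and q: "weierstrass_poly_factor a n q"
    and "U dvd 1" and "V dvd 1" and eq: "U * fps_of_poly p = V * fps_of_poly q"
  shows "p = q \<and> U = V"
proof -
  obtain v where v: "V * v = 1"
    using \<open>V dvd 1\<close> by (metis dvdE)
  define P Q where "P = fps_of_poly p" and "Q = fps_of_poly q"
  define D where "D = v * U - 1"
  have "(v * U) * P = v * (V * Q)"
    using eq by (simp add: P_def Q_def mult.assoc)
  also have "\<dots> = Q"
    using v by (simp add: mult.assoc[symmetric] mult.commute[of v])
  finally have Q_eq: "Q = (v * U) * P" ..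
  define \<beta> where "\<beta> = P - fps_X ^ n"
  have \<beta>: "\<beta> \<in> fps_apow a 1"
    unfolding \<beta>_def P_def by (rule weierstrass_poly_factor_minus_X_power[OF ideal p])
  have "D * P = Q - P"
    using Q_eq by (simp add: D_def algebra_simps)
  then have "tau n (D * P) = 0"
    using tau_weierstrass_poly_factor[OF p] tau_weierstrass_poly_factor[OF q]
    by (simp add: P_def Q_def tau_diff)
  moreover have "D * P = fps_X ^ n * D + \<beta> * D"
    by (simp add: \<beta>_def algebra_simps)
  ultimately have "D + tau n (\<beta> * D) = 0"
    by (simp add: tau_add tau_X_power_mult)
  then have "D = 0"
    by (rule tau_mult_fixpoint_zero[OF \<beta>])
  then have vU: "v * U = 1"
    by (simp add: D_def)
  have "U = V * (v * U)"
    using v by (simp add: mult.assoc[symmetric])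
  then have "U = V"
    using vU by simp
  moreover have "p = q"
    using Q_eq vU by (simp add: P_def Q_def fps_of_poly_eq_iff)
  ultimately show ?thesis
    by simp
qed

lemma weierstrass_factorization:
  assumes nontrivial: "(1::'a) \<noteq> 0" and dist: "distinguished a n f"
  shows "weierstrass_poly_factor a n (Pf a n f) \<and> Uf a n f dvd 1 \<and> f = Uf a n f * fps_of_poly (Pf a n f)"
proof -
  obtain U p where U: "U dvd 1" and p: "weierstrass_poly_factor a n p" and f: "f = U * fps_of_poly p"
    using weierstrass_preparation[OF nontrivial dist] by blast
  have unique: "p' = p \<and> U' = U"
    if "weierstrass_poly_factor a n p'" "U' dvd 1" "f = U' * fps_of_poly p'" for p' U'
    using weierstrass_preparation_unique[OF that(1) p that(2) U] that(3) f by simp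
  have "Pf a n f = p"
    unfolding Pf_def using U p f unique by (intro the_equality) blast+
  moreover have "Uf a n f = U"
    unfolding Uf_def using U p f unique by (intro the_equality) blast+
  ultimately show ?thesis
    using U p f by simp
qed

lemma Uf_mult_ring_inv:
  assumes "(1::'a) \<noteq> 0" and "distinguished a n f"
  shows "Uf a n f * ring_inv (Uf a n f) = 1"
proof -
  obtain u where "Uf a n f * u = 1"
    using weierstrass_factorization[OF assms] by (auto elim!: dvdE)
  then show ?thesis
    by (simp add: ring_inv_eqI)
qed

lemma Pf_eq_ring_inv_Uf_mult:
  assumes "(1::'a) \<noteq> 0" and "distinguished a n f"
  shows "fps_of_poly (Pf a n f) = ring_inv (Uf a n f) * f"
proof -
  have "f = Uf a n f * fps_of_poly (Pf a n f)"
    using weierstrass_factorization[OF assms] by blast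
  then have "ring_inv (Uf a n f) * f = ring_inv (Uf a n f) * (Uf a n f * fps_of_poly (Pf a n f))"
    by (rule arg_cong)
  also have "\<dots> = (Uf a n f * ring_inv (Uf a n f)) * fps_of_poly (Pf a n f)"
    by (simp only: ac_simps)
  finally show ?thesis
    using Uf_mult_ring_inv[OF assms] by simp
qed

end

lemma rmod_cong:
  assumes "rep_systems a m Reps" and "i \<le> m"
  shows "r - rmod a Reps i r \<in> ideal_pow a i"
proof -
  have "\<exists>!q. q \<in> Reps i \<and> cong_mod r q (ideal_pow a i)"
    using assms unfolding rep_systems_def by blast
  then have "rmod a Reps i r \<in> Reps i \<and> cong_mod r (rmod a Reps i r) (ideal_pow a i)"
    unfolding rmod_def by (rule theI')
  then show ?thesis
    by (simp add: cong_mod_def)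
qed

lemma fmod_diff_in_fps_Apow:
  assumes "rep_systems a m Reps" and "k \<le> m"
  shows "fps_of_poly (fmod a Reps k h) - h \<in> fps_Apow a k"
proof (rule fps_ApowI)
  fix j
  have coeff_fmod: "coeff (fmod a Reps k h) j = (if j < k then rmod a Reps (k - j) (h $ j) else 0)"
    by (simp add: fmod_def coeff_sum coeff_monom sum.delta sum.delta')
  show "(fps_of_poly (fmod a Reps k h) - h) $ j \<in> ideal_pow a (k - j)"
  proof (cases "j < k")
    case True
    have "h $ j - rmod a Reps (k - j) (h $ j) \<in> ideal_pow a (k - j)"
      using assms by (intro rmod_cong) auto
    then show ?thesis
      using True is_ideal_uminus[OF is_ideal_ideal_pow] by (fastforce simp: coeff_fmod)
  qed (simp add: is_ideal_0 is_ideal_ideal_pow)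
qed

lemma le_weight_minus_steps:
  fixes n N i :: nat
  assumes "i < N"
  shows "N \<le> (n + 1) * N - n * (i + 1)"
proof -
  have "n * (i + 1) \<le> n * N"
    using assms by (intro mult_le_mono2) simp
  then show ?thesis
    by (simp add: algebra_simps)
qed

lemma le_weight_minus_step: "N \<le> (n + 1) * N - (n::nat)"
  using le_weight_minus_steps[of 0 N n] by (cases N) simp_all

lemma Sseq_approximates_funpow:
  fixes g t t' :: "'a::comm_ring_1 fps"
  assumes reps: "rep_systems a ((n + 1) * N) Reps"
    and t: "t - t' \<in> fps_Apow a ((n + 1) * N - n)"
  defines "L \<equiv> \<lambda>x. tau n (t' * alpha n g * x)"
  shows "Sseq a Reps n N g t i - (L ^^ i) 1 \<in> fps_Apow a ((n + 1) * N - n * (i + 1))"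
proof (induction i)
  case 0
  then show ?case by (simp add: is_ideal_0[OF is_ideal_fps_Apow])
next
  case (Suc i)
  let ?S = "Sseq a Reps n N g t" and ?M = "(n + 1) * N"
  let ?w = "?M - n * (Suc i + 1)"
  have "?S (Suc i) - tau n (t * alpha n g * ?S i) \<in> fps_Apow a ?w"
    unfolding Sseq.simps(2) using reps by (rule fmod_diff_in_fps_Apow) simp
  moreover have "tau n ((t - t') * alpha n g * ?S i) \<in> fps_Apow a (?M - n - n)"
    using t by (intro tau_fps_Apow fps_Apow_mult_right)
  then have "tau n ((t - t') * alpha n g * ?S i) \<in> fps_Apow a ?w"
    by (rule fps_Apow_mono) (simp add: diff_le_mono2)
  moreover have "tau n (t' * alpha n g * (?S i - (L ^^ i) 1)) \<in> fps_Apow a (?M - n * (i + 1) - n)"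
    using Suc.IH by (rule tau_mult_fps_Apow)
  then have "tau n (t' * alpha n g * (?S i - (L ^^ i) 1)) \<in> fps_Apow a ?w"
    by (simp add: diff_diff_left add_ac)
  moreover have "?S (Suc i) - (L ^^ Suc i) 1 = (?S (Suc i) - tau n (t * alpha n g * ?S i))
      + tau n ((t - t') * alpha n g * ?S i) + tau n (t' * alpha n g * (?S i - (L ^^ i) 1))"
    by (simp add: L_def algebra_simps tau_diff)
  ultimately show ?case
    by (simp only: fps_Apow_add)
qed

lemma Sseq_sum_approximates_neumann_sum:
  fixes g t t' :: "'a::comm_ring_1 fps"
  assumes reps: "rep_systems a ((n + 1) * N) Reps"
    and t: "t - t' \<in> fps_Apow a ((n + 1) * N - n)"
  defines "L \<equiv> \<lambda>x. tau n (t' * alpha n g * x)"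
  shows "(\<Sum>i<N. (-1) ^ i * Sseq a Reps n N g t i) - (\<Sum>i<N. (-1) ^ i * (L ^^ i) 1) \<in> fps_Apow a N"
proof -
  have "Sseq a Reps n N g t i - (L ^^ i) 1 \<in> fps_Apow a N" if "i < N" for i
    using Sseq_approximates_funpow[OF reps t, of g i] le_weight_minus_steps[OF that, of n]
    unfolding L_def by (rule fps_Apow_mono)
  then show ?thesis
    unfolding sum_subtractf[symmetric] right_diff_distrib[symmetric]
    by (auto intro: is_ideal_sum[OF is_ideal_fps_Apow] fps_Apow_mult_left)
qed

lemma tau_mult_fixpoint_in_fps_Apow:
  assumes \<beta>: "\<beta> \<in> fps_apow a 1" and c: "c \<in> fps_Apow a ((n + 1) * N - n)"
    and D: "D = c - tau n (\<beta> * D)"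
  shows "D \<in> fps_Apow a N"
proof -
  define L where "L x = tau n (\<beta> * x)" for x
  have additive: "L (x - y) = L x - L y" for x y
    by (simp add: L_def algebra_simps tau_diff)
  have D: "D = (\<Sum>i<N. (-1) ^ i * (L ^^ i) c) + (-1) ^ N * (L ^^ N) D"
    using D unfolding L_def[symmetric] by (rule fixpoint_neumann_expansion[OF additive])
  have iterates: "(L ^^ i) c \<in> fps_Apow a ((n + 1) * N - n - n * i)" for i
    using c by (intro funpow_fps_Apow) (simp_all add: L_def tau_mult_fps_Apow)
  have "(L ^^ i) c \<in> fps_Apow a N" if "i < N" for i
    using le_weight_minus_steps[OF that, of n]
    by (intro fps_Apow_mono[OF iterates]) (simp add: diff_diff_left algebra_simps)
  then have "(\<Sum>i<N. (-1) ^ i * (L ^^ i) c) \<in> fps_Apow a N"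
    by (auto intro: is_ideal_sum[OF is_ideal_fps_Apow] fps_Apow_mult_left)
  moreover have "(L ^^ N) D \<in> fps_apow a N"
    using \<beta> by (intro funpow_fps_apow) (simp add: L_def tau_mult_fps_apow)
  ultimately show ?thesis
    by (subst D) (intro fps_Apow_add fps_Apow_mult_left[OF fps_apow_subset_Apow])
qed

section \<open>Congruences between the Weierstrass factors\<close>

context complete_adic_ring
begin

lemma ring_inv_Uf_mult_Uf_cong:
  assumes nontrivial: "(1::'a) \<noteq> 0"
    and f: "distinguished a n f" and g: "distinguished a n g"
    and fg: "f - g \<in> fps_Apow a ((n + 1) * N)"
  shows "ring_inv (Uf a n f) * Uf a n g - 1 \<in> fps_Apow a N"
proof -
  define uf UG PG where "uf = ring_inv (Uf a n f)" and "UG = Uf a n g" and "PG = fps_of_poly (Pf a n g)"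
  define D where "D = uf * UG - 1"
  define \<beta> where "\<beta> = PG - fps_X ^ n"
  define c where "c = - tau n (uf * (f - g))"
  have \<beta>: "\<beta> \<in> fps_apow a 1"
    unfolding \<beta>_def PG_def
    using weierstrass_factorization[OF nontrivial g] by (intro weierstrass_poly_factor_minus_X_power ideal) blast
  have tau_P: "tau n (fps_of_poly (Pf a n h)) = 1" if "distinguished a n h" for h
    using weierstrass_factorization[OF nontrivial that] by (blast intro: tau_weierstrass_poly_factor)
  have "fps_of_poly (Pf a n f) - PG = fps_X ^ n * D + \<beta> * D + uf * (f - g)"
  proof -
    have "g = UG * PG"
      using weierstrass_factorization[OF nontrivial g] by (simp add: UG_def PG_def)
    then have "fps_X ^ n * D + \<beta> * D = uf * g - PG"
      by (simp add: D_def \<beta>_def algebra_simps)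
    then show ?thesis
      using Pf_eq_ring_inv_Uf_mult[OF nontrivial f] by (simp add: uf_def algebra_simps)
  qed
  then have "tau n (fps_of_poly (Pf a n f) - PG) = D + tau n (\<beta> * D) - c"
    by (simp add: c_def tau_add tau_X_power_mult)
  then have D: "D = c - tau n (\<beta> * D)"
    using tau_P[OF f] tau_P[OF g] by (simp add: PG_def tau_diff algebra_simps)
  have "c \<in> fps_Apow a ((n + 1) * N - n)"
    unfolding c_def using fg by (intro fps_Apow_uminus tau_mult_fps_Apow)
  from \<beta> this D have "D \<in> fps_Apow a N"
    by (rule tau_mult_fixpoint_in_fps_Apow)
  then show ?thesis
    by (simp add: D_def uf_def UG_def)
qed

lemma Uf_cong:
  assumes "(1::'a) \<noteq> 0" and f: "distinguished a n f" and "distinguished a n g"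
    and "f - g \<in> fps_Apow a ((n + 1) * N)"
  shows "Uf a n f - Uf a n g \<in> fps_Apow a N"
proof -
  have "- Uf a n f * (ring_inv (Uf a n f) * Uf a n g - 1) \<in> fps_Apow a N"
    using ring_inv_Uf_mult_Uf_cong[OF assms] by (rule fps_Apow_mult_left)
  moreover have "- Uf a n f * (ring_inv (Uf a n f) * Uf a n g - 1)
      = Uf a n f - (Uf a n f * ring_inv (Uf a n f)) * Uf a n g"
    by (simp add: algebra_simps)
  ultimately show ?thesis
    using Uf_mult_ring_inv[OF assms(1) f] by simp
qed

lemma ring_inv_Uf_cong:
  assumes "(1::'a) \<noteq> 0" and "distinguished a n f" and g: "distinguished a n g"
    and "f - g \<in> fps_Apow a ((n + 1) * N)"
  shows "ring_inv (Uf a n f) - ring_inv (Uf a n g) \<in> fps_Apow a N"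
proof -
  have "(ring_inv (Uf a n f) * Uf a n g - 1) * ring_inv (Uf a n g) \<in> fps_Apow a N"
    using ring_inv_Uf_mult_Uf_cong[OF assms] by (rule fps_Apow_mult_right)
  moreover have "(ring_inv (Uf a n f) * Uf a n g - 1) * ring_inv (Uf a n g)
      = ring_inv (Uf a n f) * (Uf a n g * ring_inv (Uf a n g)) - ring_inv (Uf a n g)"
    by (simp add: algebra_simps)
  ultimately show ?thesis
    using Uf_mult_ring_inv[OF assms(1) g] by simp
qed

lemma Pf_cong:
  assumes nontrivial: "(1::'a) \<noteq> 0"
    and f: "distinguished a n f" and g: "distinguished a n g"
    and fg: "f - g \<in> fps_Apow a ((n + 1) * N)" and "1 \<le> N"
  shows "fps_of_poly (Pf a n f) - fps_of_poly (Pf a n g) \<in> fps_Apow a (N + 1)"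
proof (cases "n = 0")
  case True
  have "fps_of_poly (Pf a 0 h) = 1" if "distinguished a 0 h" for h
  proof -
    have "weierstrass_poly_factor a 0 (Pf a 0 h)"
      using weierstrass_factorization[OF nontrivial that] by blast
    then show ?thesis
      using tau_weierstrass_poly_factor by fastforce
  qed
  then show ?thesis
    using f g True by (simp add: is_ideal_0[OF is_ideal_fps_Apow])
next
  case False
  define UG PG where "UG = Uf a n g" and "PG = fps_of_poly (Pf a n g)"
  define D where "D = ring_inv (Uf a n f) * UG - 1"
  have "fps_X ^ n \<in> fps_Apow a n"
    using fps_X_power_in_ideal_pow[of n a] ideal_pow_bigA[OF ideal] by simp
  then have "fps_X ^ n \<in> fps_Apow a 1"
    using False by (elim fps_Apow_mono) simp
  moreover have "PG - fps_X ^ n \<in> fps_Apow a 1"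
    unfolding PG_def using weierstrass_factorization[OF nontrivial g]
    by (intro fps_apow_subset_Apow weierstrass_poly_factor_minus_X_power ideal) blast
  ultimately have "fps_X ^ n + (PG - fps_X ^ n) \<in> fps_Apow a 1"
    by (rule fps_Apow_add)
  then have "PG \<in> fps_Apow a 1"
    by simp
  then have "D * PG \<in> fps_Apow a (N + 1)"
    using ring_inv_Uf_mult_Uf_cong[OF nontrivial f g fg] by (intro fps_Apow_mult) (simp_all add: D_def UG_def)
  moreover have "1 * N \<le> n * N"
    using False by (intro mult_le_mono1) simp
  then have "N + 1 \<le> (n + 1) * N"
    using \<open>1 \<le> N\<close> by simp
  then have "ring_inv (Uf a n f) * (f - g) \<in> fps_Apow a (N + 1)"
    using fg by (intro fps_Apow_mono[OF fps_Apow_mult_left])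
  moreover have "fps_of_poly (Pf a n f) - PG = D * PG + ring_inv (Uf a n f) * (f - g)"
  proof -
    have "g = UG * PG"
      using weierstrass_factorization[OF nontrivial g] unfolding UG_def PG_def by blast
    then show ?thesis
      using Pf_eq_ring_inv_Uf_mult[OF nontrivial f] by (simp add: D_def algebra_simps)
  qed
  ultimately show ?thesis
    by (simp add: PG_def fps_Apow_add)
qed

lemma ring_inv_Uf_fixpoint:
  assumes nontrivial: "(1::'a) \<noteq> 0" and g: "distinguished a n g" and t: "tau n g * t = 1"
  defines "w \<equiv> ring_inv (Uf a n g) * tau n g"
  shows "w + tau n (t * alpha n g * w) = 1"
proof -
  define u where "u = ring_inv (Uf a n g)"
  have "t * w = u * (tau n g * t)"
    by (simp add: w_def u_def ac_simps)
  then have u: "u = t * w"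
    using t by simp
  have "fps_of_poly (Pf a n g) = u * (alpha n g + fps_X ^ n * tau n g)"
    using Pf_eq_ring_inv_Uf_mult[OF nontrivial g] by (simp add: u_def alpha_plus_X_power_tau)
  also have "\<dots> = u * alpha n g + fps_X ^ n * w"
    by (simp add: w_def u_def algebra_simps)
  also have "\<dots> = t * alpha n g * w + fps_X ^ n * w"
    by (simp add: u ac_simps)
  finally have "tau n (t * alpha n g * w) + w = 1"
    using weierstrass_factorization[OF nontrivial g] tau_weierstrass_poly_factor
    by (metis tau_add tau_X_power_mult)
  then show ?thesis
    by (simp add: add.commute)
qed

lemma ring_inv_Uf_approximation:
  assumes nontrivial: "(1::'a) \<noteq> 0" and g: "distinguished a n g"
    and reps: "rep_systems a ((n + 1) * N) Reps"
  defines "t \<equiv> fps_of_poly (fmod a Reps ((n + 1) * N - n) (ring_inv (tau n g)))"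
  shows "t * (\<Sum>i<N. (-1) ^ i * Sseq a Reps n N g t i) - ring_inv (Uf a n g) \<in> fps_Apow a N"
proof -
  obtain t' where t': "tau n g * t' = 1"
    using distinguished_tau_unit[OF g] ..
  have t_close: "t - t' \<in> fps_Apow a ((n + 1) * N - n)"
    unfolding t_def ring_inv_eqI[OF t'] using reps by (rule fmod_diff_in_fps_Apow) simp
  define L where "L x = tau n (t' * alpha n g * x)" for x
  have additive: "L (x - y) = L x - L y" for x y
    by (simp add: L_def algebra_simps tau_diff)
  define w where "w = ring_inv (Uf a n g) * tau n g"
  define SS SL where "SS = (\<Sum>i<N. (-1) ^ i * Sseq a Reps n N g t i)"
    and "SL = (\<Sum>i<N. (-1) ^ i * (L ^^ i) 1)"
  have "w = 1 - L w"
    using ring_inv_Uf_fixpoint[OF nontrivial g t'] by (simp add: w_def L_def algebra_simps)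
  then have w: "w = SL + (-1) ^ N * (L ^^ N) w"
    unfolding SL_def by (rule fixpoint_neumann_expansion[OF additive])
  have "t' * w = ring_inv (Uf a n g) * (tau n g * t')"
    by (simp add: w_def ac_simps)
  moreover have "t' * w = t' * (SL + (-1) ^ N * (L ^^ N) w)"
    using w by (rule arg_cong)
  ultimately have "ring_inv (Uf a n g) = t' * (SL + (-1) ^ N * (L ^^ N) w)"
    using t' by simp
  then have split: "t * SS - ring_inv (Uf a n g)
      = (t - t') * SS + t' * (SS - SL) - t' * ((-1) ^ N * (L ^^ N) w)"
    by (simp add: algebra_simps)
  have "t - t' \<in> fps_Apow a N"
    using t_close le_weight_minus_step by (rule fps_Apow_mono)
  then have "(t - t') * SS \<in> fps_Apow a N"
    by (rule fps_Apow_mult_right)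
  moreover have "SS - SL \<in> fps_Apow a N"
    unfolding SS_def SL_def L_def[abs_def] by (rule Sseq_sum_approximates_neumann_sum[OF reps t_close])
  then have "t' * (SS - SL) \<in> fps_Apow a N"
    by (rule fps_Apow_mult_left)
  moreover have "(L ^^ N) w \<in> fps_apow a N"
    using distinguished_alpha[OF g]
    by (intro funpow_fps_apow) (simp add: L_def tau_mult_fps_apow is_ideal_mult_left[OF is_ideal_fps_apow])
  then have "t' * ((-1) ^ N * (L ^^ N) w) \<in> fps_Apow a N"
    by (intro fps_Apow_mult_left fps_apow_subset_Apow)
  ultimately show ?thesis
    unfolding SS_def[symmetric] split by (intro fps_Apow_diff fps_Apow_add)
qed

lemma ring_inv_Uf_and_Pf_approximation:
  assumes nontrivial: "(1::'a) \<noteq> 0"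
    and f: "distinguished a n f" and g: "distinguished a n g"
    and fg: "f - g \<in> fps_Apow a ((n + 1) * N)"
    and reps: "rep_systems a ((n + 1) * N) Reps"
  defines "t \<equiv> fps_of_poly (fmod a Reps ((n + 1) * N - n) (ring_inv (tau n g)))"
  defines "T \<equiv> t * (\<Sum>i<N. (-1) ^ i * Sseq a Reps n N g t i)"
  shows "ring_inv (Uf a n f) - T \<in> fps_Apow a N \<and> fps_of_poly (Pf a n f) - g * T \<in> fps_Apow a N"
proof
  have "ring_inv (Uf a n f) - ring_inv (Uf a n g) - (T - ring_inv (Uf a n g)) \<in> fps_Apow a N"
    using ring_inv_Uf_cong[OF nontrivial f g fg] ring_inv_Uf_approximation[OF nontrivial g reps]
    unfolding T_def t_def by (rule fps_Apow_diff)
  then show inv: "ring_inv (Uf a n f) - T \<in> fps_Apow a N"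
    by simp
  have "f - g \<in> fps_Apow a N"
    using fg by (rule fps_Apow_mono) simp
  then have "ring_inv (Uf a n f) * (f - g) + g * (ring_inv (Uf a n f) - T) \<in> fps_Apow a N"
    using inv by (intro fps_Apow_add fps_Apow_mult_left)
  moreover have "fps_of_poly (Pf a n f) - g * T = ring_inv (Uf a n f) * (f - g) + g * (ring_inv (Uf a n f) - T)"
    by (simp add: Pf_eq_ring_inv_Uf_mult[OF nontrivial f] algebra_simps)
  ultimately show "fps_of_poly (Pf a n f) - g * T \<in> fps_Apow a N"
    by simp
qed

end

theorem proposition5p1:
  fixes a :: "'a::comm_ring_1 set" and F :: "nat \<Rightarrow> 'a set"
    and f g :: "'a fps" and n N :: nat
  assumes a_ideal: "is_ideal a"
    and filt: "is_adic_filtration a F" and compl: "complete_wrt F"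
    and N_pos: "N \<ge> 1"
    and f_dist: "distinguished a n f" and g_dist: "distinguished a n g"
    and fg: "cong_mod f g (ideal_pow (bigA a) ((n + 1) * N))"
  shows "cong_mod (fps_of_poly (Pf a n f)) (fps_of_poly (Pf a n g)) (ideal_pow (bigA a) (N + 1))
       \<and> cong_mod (Uf a n f) (Uf a n g) (ideal_pow (bigA a) N)
       \<and> (\<forall>Reps. rep_systems a ((n + 1) * N) Reps \<longrightarrow>
            g = fps_of_poly (fmod a Reps ((n + 1) * N) f) \<longrightarrow>
            (let t = fps_of_poly (fmod a Reps ((n + 1) * N - n) (ring_inv (tau n g)));
                 T = t * (\<Sum>i<N. (-1) ^ i * Sseq a Reps n N g t i)
             in cong_mod (ring_inv (Uf a n f)) T (ideal_pow (bigA a) N)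
              \<and> cong_mod (fps_of_poly (Pf a n f)) (g * T) (ideal_pow (bigA a) N)))"
proof (cases "(1::'a) = 0")
  case True
  then have "(1::'a fps) = 0"
    by (intro fps_ext) simp
  then have "cong_mod x y (ideal_pow (bigA a) k)" for x y :: "'a fps" and k
    using is_ideal_ideal_pow by (rule cong_mod_trivial_ring)
  then show ?thesis
    by (simp add: Let_def del: ideal_pow.simps)
next
  case nontrivial: False
  interpret complete_adic_ring a F
    using a_ideal filt compl by unfold_locales
  have fg: "f - g \<in> fps_Apow a ((n + 1) * N)"
    using fg by (simp add: cong_mod_def ideal_pow_bigA[OF a_ideal] del: ideal_pow.simps)
  note facts = nontrivial f_dist g_dist fg
  show ?thesis
    unfolding cong_mod_def ideal_pow_bigA[OF a_ideal] Let_def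
    using Pf_cong[OF facts N_pos] Uf_cong[OF facts] ring_inv_Uf_and_Pf_approximation[OF facts] by blast
qed

end
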